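(* Let $G$ be a ribbon graph. Then (1) $P_{\langle\tau\delta\tau\rangle}(G,x)=P_{\langle\delta\rangle}(G^{\times},x)$; (2) $P_{\langle\delta,\tau\rangle}(G,x)=2^{e(G)}P_{\langle\delta\tau\rangle}(G,x)$.
   Context: A ribbon graph $G=(V(G),E(G))$ is a (orientable or non-orientable) surface with boundary, represented as the union of a set $V(G)$ of vertex discs and a set $E(G)$ of edge discs (ribbons) such that vertices and edges intersect in disjoint line segments, each such segment lies on the boundary of exactly one vertex and exactly one edge, and every edge contains exactly two such segments. $v(G)$, $e(G)$ denote the numbers of vertices and edges. For $A\subseteq E(G)$, the partial dual $G^{\delta(A)}$ is obtained by gluing a disc along each boundary component of the spanning ribbon subgraph $(V(G),A)$ (these discs become the vertex discs), removing the interiors of the original vertex discs, and keeping the edge ribbons. The partial Petrial $G^{\tau(A)}$ adds a half-twist to each edge in $A$; $G^{\times}=G^{\tau(E(G))}$ (Petrie dual, with $E(G^\times)=E(G)$). For a word $w=w_1\cdots w_n$ over $\{\delta,\tau\}$, $G^{w(A)}=(\cdots(G^{w_n(A)})^{w_{n-1}(A)}\cdots)^{w_1(A)}$ (rightmost letter applied first), $G^{1(A)}=G$, and $G^{\xi(A)\pi(B)}=(G^{\xi(A)})^{\pi(B)}$. Vertex polynomials (sums over ordered partitions of $E(G)$ into pairwise disjoint, possibly empty parts): $P_{\langle\delta\rangle}(G,x)=\sum_{A\subseteq E(G)}x^{v(G^{\delta(A)})}$; $P_{\langle\tau\delta\tau\rangle}(G,x)=\sum_{A\subseteq E(G)}x^{v(G^{\tau\delta\tau(A)})}$;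 $P_{\langle\delta\tau\rangle}(G,x)=\sum_{(A_1,A_2,A_3)}x^{v(G^{1(A_1)\tau\delta(A_2)\delta\tau(A_3)})}$; $P_{\langle\delta,\tau\rangle}(G,x)=\sum_{(A_1,\dots,A_6)}x^{v(G^{1(A_1)\delta(A_2)\tau(A_3)\tau\delta(A_4)\delta\tau(A_5)\tau\delta\tau(A_6)})}$. *)

theory Defs
  imports "HOL-Library.FuncSet" "HOL-Computational_Algebra.Polynomial"
begin

text \<open>Combinatorial encoding of (possibly non-orientable) ribbon graphs by flags
(corners of edge ribbons).  Each edge e has the four corners (e, b1, b2).
  rv : follows the boundary arc of a vertex disc to the next corner;
  rs : pairs the two corners of one attaching segment (edge end);
  re : pairs the two corners on the same long side of the edge ribbon.
Vertices with at least one incident edge-end are the orbits of rv, rs;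
vertex discs without incident edges are counted by riso.\<close>

type_synonym 'e flag = "'e \<times> bool \<times> bool"

record 'e rgraph =
  redges :: "'e set"
  riso :: nat
  rv :: "'e flag \<Rightarrow> 'e flag"
  rs :: "'e flag \<Rightarrow> 'e flag"
  re :: "'e flag \<Rightarrow> 'e flag"

definition flags :: "'e rgraph \<Rightarrow> 'e flag set" where
  "flags G = redges G \<times> (UNIV :: (bool \<times> bool) set)"

definition fpf_invol_on :: "'a set \<Rightarrow> ('a \<Rightarrow> 'a) \<Rightarrow> bool" where
  "fpf_invol_on X f \<longleftrightarrow> (\<forall>x\<in>X. f x \<in> X \<and> f (f x) = x \<and> f x \<noteq> x)"

definition ribbon_graph :: "'e rgraph \<Rightarrow> bool" where
  "ribbon_graph G \<longleftrightarrow> finite (redges G)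
     \<and> fpf_invol_on (flags G) (rv G) \<and> fpf_invol_on (flags G) (rs G) \<and> fpf_invol_on (flags G) (re G)
     \<and> (\<forall>x\<in>flags G. fst (rs G x) = fst x \<and> fst (re G x) = fst x
            \<and> rs G (re G x) = re G (rs G x) \<and> rs G x \<noteq> re G x)"

definition vrel :: "'e rgraph \<Rightarrow> ('e flag \<times> 'e flag) set" where
  "vrel G = {(x, rv G x) | x. x \<in> flags G} \<union> {(x, rs G x) | x. x \<in> flags G}"

definition nv :: "'e rgraph \<Rightarrow> nat" where
  "nv G = riso G + card (flags G // (vrel G)\<^sup>*)"

definition ne :: "'e rgraph \<Rightarrow> nat" where
  "ne G = card (redges G)"

definition pdual :: "'e set \<Rightarrow> 'e rgraph \<Rightarrow> 'e rgraph" where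
  "pdual A G = G\<lparr> rs := (\<lambda>x. if fst x \<in> A then re G x else rs G x),
                  re := (\<lambda>x. if fst x \<in> A then rs G x else re G x) \<rparr>"

definition ppetrial :: "'e set \<Rightarrow> 'e rgraph \<Rightarrow> 'e rgraph" where
  "ppetrial A G = G\<lparr> re := (\<lambda>x. if fst x \<in> A then rs G (re G x) else re G x) \<rparr>"

definition petrie :: "'e rgraph \<Rightarrow> 'e rgraph" where
  "petrie G = ppetrial (redges G) G"

text \<open>Words (rightmost letter applied first).\<close>
definition op_td :: "'e set \<Rightarrow> 'e rgraph \<Rightarrow> 'e rgraph" where
  "op_td A G = ppetrial A (pdual A G)"
definition op_dt :: "'e set \<Rightarrow> 'e rgraph \<Rightarrow> 'e rgraph" where
  "op_dt A G = pdual A (ppetrial A G)"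
definition op_tdt :: "'e set \<Rightarrow> 'e rgraph \<Rightarrow> 'e rgraph" where
  "op_tdt A G = ppetrial A (pdual A (ppetrial A G))"

text \<open>Ordered partitions of E into k parts encoded by f in PiE E {0..<k}; part i = A_(i+1).\<close>
definition part :: "'e set \<Rightarrow> ('e \<Rightarrow> nat) \<Rightarrow> nat \<Rightarrow> 'e set" where
  "part E f i = {e \<in> E. f e = i}"

definition P_delta :: "'e rgraph \<Rightarrow> int poly" where
  "P_delta G = (\<Sum>A\<in>Pow (redges G). monom 1 (nv (pdual A G)))"

definition P_tdt :: "'e rgraph \<Rightarrow> int poly" where
  "P_tdt G = (\<Sum>A\<in>Pow (redges G). monom 1 (nv (op_tdt A G)))"

definition P_dt :: "'e rgraph \<Rightarrow> int poly" where
  "P_dt G = (\<Sum>f\<in>redges G \<rightarrow>\<^sub>E {0..<3::nat}.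
      (let E = redges G in monom 1 (nv (op_dt (part E f 2) (op_td (part E f 1) G)))))"

definition P_dtau :: "'e rgraph \<Rightarrow> int poly" where
  "P_dtau G = (\<Sum>f\<in>redges G \<rightarrow>\<^sub>E {0..<6::nat}.
      (let E = redges G in monom 1 (nv
        (op_tdt (part E f 5) (op_dt (part E f 4) (op_td (part E f 3)
          (ppetrial (part E f 2) (pdual (part E f 1) G))))))))"

end

theory Submission
  imports Defs
begin

text \<open>The number of vertices only sees the involution rs (together with rv).  On the corners of
  one edge, rs and re generate a Klein four-group, and every partial dual or partial Petrial
  replaces the pair (rs, re) on an edge by another ordered pair of distinct non-identity
  elements of that group.  Hence a word applied to a set of edges only matters through the
  element it installs as the new rs.  For (1), \<open>\<tau>\<delta>\<tau>(A)\<close> on G and \<open>\<delta>(A)\<close> on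
  \<open>G\<^sup>\<times>\<close> both install rs\<circ>re on A.  For (2), the six words 1, \<open>\<delta>\<close>, \<open>\<tau>\<close>,
  \<open>\<tau>\<delta>\<close>, \<open>\<delta>\<tau>\<close>, \<open>\<tau>\<delta>\<tau>\<close> install rs, re, rs, re, rs\<circ>re, rs\<circ>re, while the three
  words 1, \<open>\<tau>\<delta>\<close>, \<open>\<delta>\<tau>\<close> install rs, re, rs\<circ>re: every summand of the second
  polynomial is counted exactly 2^e(G) times in the first.\<close>

lemma nv_cong:
  assumes "redges H = redges G" "riso H = riso G" "rv H = rv G"
    and "\<And>x. x \<in> flags G \<Longrightarrow> rs H x = rs G x"
  shows "nv H = nv G"
proof -
  have flags_eq: "flags H = flags G"
    using assms(1) by (simp add: flags_def)
  have "vrel H = vrel G"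
    unfolding vrel_def flags_eq using assms by force
  then show ?thesis
    unfolding nv_def flags_eq using assms(2) by simp
qed

lemma redges_petrie [simp]: "redges (petrie G) = redges G"
  by (simp add: petrie_def ppetrial_def)

lemma nv_op_tdt: "nv (op_tdt A G) = nv (pdual A (petrie G))"
  by (rule nv_cong) (auto simp: op_tdt_def pdual_def ppetrial_def petrie_def flags_def)

datatype klein = KS | KE | KSE

fun klein_act :: "'e rgraph \<Rightarrow> klein \<Rightarrow> 'e flag \<Rightarrow> 'e flag" where
  "klein_act G KS x = rs G x"
| "klein_act G KE x = re G x"
| "klein_act G KSE x = rs G (re G x)"

text \<open>The last equation is a junk value: equal arguments multiply to the identity.\<close>
fun klein_third :: "klein \<Rightarrow> klein \<Rightarrow> klein" where
  "klein_third KS KE = KSE"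
| "klein_third KE KS = KSE"
| "klein_third KS KSE = KE"
| "klein_third KSE KS = KE"
| "klein_third KE KSE = KS"
| "klein_third KSE KE = KS"
| "klein_third c _ = c"

lemma klein_third_neq: "c \<noteq> d \<Longrightarrow> c \<noteq> klein_third c d"
  by (cases c; cases d) simp_all

lemma klein_act_klein_act:
  assumes G: "ribbon_graph G" and x: "x \<in> flags G" and "c \<noteq> d"
  shows "klein_act G c (klein_act G d x) = klein_act G (klein_third c d) x"
proof -
  have closed: "rs G y \<in> flags G" "re G y \<in> flags G" if "y \<in> flags G" for y
    using G that by (auto simp: ribbon_graph_def fpf_invol_on_def)
  have relations: "rs G (rs G y) = y" "re G (re G y) = y" "rs G (re G y) = re G (rs G y)"
    if "y \<in> flags G" for y
    using G that by (auto simp: ribbon_graph_def fpf_invol_on_def)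
  show ?thesis
    using \<open>c \<noteq> d\<close> closed[OF x] by (cases c; cases d) (simp_all add: relations x)
qed

lemma klein_act_flags:
  assumes "ribbon_graph G" "x \<in> flags G"
  shows "fst (klein_act G c x) = fst x" "klein_act G c x \<in> flags G"
  using assms by (cases c; auto simp: ribbon_graph_def fpf_invol_on_def)+

definition recoded :: "'e rgraph \<Rightarrow> 'e rgraph \<Rightarrow> ('e \<Rightarrow> klein) \<Rightarrow> ('e \<Rightarrow> klein) \<Rightarrow> bool" where
  "recoded G H a b \<longleftrightarrow> redges H = redges G \<and> riso H = riso G \<and> rv H = rv G
     \<and> (\<forall>e\<in>redges G. a e \<noteq> b e)
     \<and> (\<forall>x\<in>flags G. rs H x = klein_act G (a (fst x)) x \<and> re H x = klein_act G (b (fst x)) x)"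

definition recode_rs :: "'e rgraph \<Rightarrow> ('e \<Rightarrow> klein) \<Rightarrow> 'e rgraph" where
  "recode_rs G a = G\<lparr>rs := \<lambda>x. klein_act G (a (fst x)) x\<rparr>"

lemma recoded_self: "recoded G G (\<lambda>_. KS) (\<lambda>_. KE)"
  by (simp add: recoded_def)

lemma recoded_pdual:
  "recoded G H a b \<Longrightarrow>
     recoded G (pdual A H) (\<lambda>e. if e \<in> A then b e else a e) (\<lambda>e. if e \<in> A then a e else b e)"
  unfolding recoded_def pdual_def by force

lemma recoded_ppetrial:
  assumes G: "ribbon_graph G" and H: "recoded G H a b"
  shows "recoded G (ppetrial A H) a (\<lambda>e. if e \<in> A then klein_third (a e) (b e) else b e)"
proof -
  have "rs H (re H x) = klein_act G (klein_third (a (fst x)) (b (fst x))) x"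
    if x: "x \<in> flags G" for x
  proof -
    have e: "fst x \<in> redges G"
      using x by (auto simp: flags_def)
    have "rs H (re H x) = klein_act G (a (fst x)) (klein_act G (b (fst x)) x)"
      using H x klein_act_flags[OF G x] by (simp add: recoded_def)
    then show ?thesis
      using H e by (simp add: klein_act_klein_act[OF G x] recoded_def)
  qed
  then show ?thesis
    using H klein_third_neq by (auto simp: recoded_def ppetrial_def)
qed

lemma nv_recoded:
  assumes "recoded G H a b" and "\<And>e. e \<in> redges G \<Longrightarrow> a e = c e"
  shows "nv H = nv (recode_rs G c)"
  by (rule nv_cong) (use assms in \<open>auto simp: recoded_def recode_rs_def flags_def\<close>)

text \<open>The three values 0, 1, 2 of a partition into three parts stand for the words
  1, \<open>\<tau>\<delta>\<close>, \<open>\<delta>\<tau>\<close>; \<open>collapse\<close> sends each of the six words 1, \<open>\<delta>\<close>, \<open>\<tau>\<close>, \<open>\<tau>\<delta>\<close>,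
  \<open>\<delta>\<tau>\<close>, \<open>\<tau>\<delta>\<tau>\<close> to the one of them installing the same rs.\<close>
definition klein_of :: "nat \<Rightarrow> klein" where
  "klein_of n = (if n = 1 then KE else if n = 2 then KSE else KS)"

definition collapse :: "nat \<Rightarrow> nat" where
  "collapse n = (if n = 4 \<or> n = 5 then 2 else if n = 1 \<or> n = 3 then 1 else 0)"

lemma nv_dt_word:
  assumes "ribbon_graph G"
  shows "nv (op_dt (part (redges G) g 2) (op_td (part (redges G) g 1) G))
       = nv (recode_rs G (klein_of \<circ> g))"
  unfolding op_dt_def op_td_def
  by (rule nv_recoded, (rule recoded_ppetrial[OF assms] recoded_pdual recoded_self)+)
    (simp add: part_def klein_of_def)

lemma nv_dtau_word:
  assumes "ribbon_graph G"
  shows "nv (op_tdt (part (redges G) f 5) (op_dt (part (redges G) f 4) (op_td (part (redges G) f 3)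
            (ppetrial (part (redges G) f 2) (pdual (part (redges G) f 1) G)))))
       = nv (recode_rs G (klein_of \<circ> (\<lambda>e\<in>redges G. collapse (f e))))"
  unfolding op_tdt_def op_dt_def op_td_def
  by (rule nv_recoded, (rule recoded_ppetrial[OF assms] recoded_pdual recoded_self)+)
    (auto simp: part_def klein_of_def collapse_def)

lemma card_collapse_fibre: "k < 3 \<Longrightarrow> card {n \<in> {0..<6}. collapse n = k} = 2"
proof -
  assume "k < 3"
  then have "{n \<in> {0..<6}. collapse n = k} = (if k = 0 then {0, 2} else if k = 1 then {1, 3} else {4, 5})"
    by (auto simp: collapse_def)
  then show ?thesis
    by simp
qed

lemma sum_PiE_uniform_fibres:
  fixes F :: "('a \<Rightarrow> 'b) \<Rightarrow> 'c::comm_semiring_1"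
  assumes E: "finite E" and A: "finite A" and B: "finite B" and p: "p ` A \<subseteq> B"
    and fibre: "\<And>y. y \<in> B \<Longrightarrow> card {x \<in> A. p x = y} = k"
  shows "(\<Sum>f\<in>E \<rightarrow>\<^sub>E A. F (\<lambda>e\<in>E. p (f e))) = of_nat (k ^ card E) * (\<Sum>g\<in>E \<rightarrow>\<^sub>E B. F g)"
proof -
  let ?q = "\<lambda>f. \<lambda>e\<in>E. p (f e)"
  have fibre_PiE: "{f \<in> E \<rightarrow>\<^sub>E A. ?q f = g} = (\<Pi>\<^sub>E e\<in>E. {x \<in> A. p x = g e})"
    if g: "g \<in> E \<rightarrow>\<^sub>E B" for g
  proof (intro set_eqI iffI)
    fix f assume "f \<in> {f \<in> E \<rightarrow>\<^sub>E A. ?q f = g}"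
    then show "f \<in> (\<Pi>\<^sub>E e\<in>E. {x \<in> A. p x = g e})"
      by (auto simp: PiE_def Pi_def dest: fun_cong)
  next
    fix f assume "f \<in> (\<Pi>\<^sub>E e\<in>E. {x \<in> A. p x = g e})"
    then show "f \<in> {f \<in> E \<rightarrow>\<^sub>E A. ?q f = g}"
      using g by (auto simp: PiE_def Pi_def extensional_def intro!: ext)
  qed
  have card_fibre: "card {f \<in> E \<rightarrow>\<^sub>E A. ?q f = g} = k ^ card E" if g: "g \<in> E \<rightarrow>\<^sub>E B" for g
  proof -
    have "card (\<Pi>\<^sub>E e\<in>E. {x \<in> A. p x = g e}) = (\<Prod>e\<in>E. card {x \<in> A. p x = g e})"
      using E by (rule card_PiE)
    also have "\<dots> = (\<Prod>e\<in>E. k)"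
      using g fibre by (intro prod.cong) auto
    finally show ?thesis
      using E by (simp add: fibre_PiE[OF g])
  qed
  have "(\<Sum>f\<in>E \<rightarrow>\<^sub>E A. F (?q f)) = (\<Sum>g\<in>E \<rightarrow>\<^sub>E B. \<Sum>f\<in>{f \<in> E \<rightarrow>\<^sub>E A. ?q f = g}. F (?q f))"
    using p by (intro sum.group[symmetric]) (auto simp: E A B finite_PiE PiE_iff)
  also have "\<dots> = (\<Sum>g\<in>E \<rightarrow>\<^sub>E B. of_nat (k ^ card E) * F g)"
    by (intro sum.cong refl) (simp add: card_fibre)
  finally show ?thesis
    by (simp add: sum_distrib_left)
qed

theorem mainTheorem3:
  fixes G :: "'e rgraph"
  assumes "ribbon_graph G"
  shows "P_tdt G = P_delta (petrie G) \<and> P_dtau G = smult (2 ^ ne G) (P_dt G)"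
proof
  show "P_tdt G = P_delta (petrie G)"
    by (simp add: P_tdt_def P_delta_def nv_op_tdt)
next
  let ?E = "redges G"
  define F where "F g = (monom 1 (nv (recode_rs G (klein_of \<circ> g))) :: int poly)" for g
  have "P_dtau G = (\<Sum>f\<in>?E \<rightarrow>\<^sub>E {0..<6}. F (\<lambda>e\<in>?E. collapse (f e)))"
    unfolding P_dtau_def Let_def nv_dtau_word[OF assms] F_def ..
  also have "\<dots> = of_nat (2 ^ ne G) * (\<Sum>g\<in>?E \<rightarrow>\<^sub>E {0..<3}. F g)"
    using assms card_collapse_fibre unfolding ne_def
    by (intro sum_PiE_uniform_fibres) (auto simp: ribbon_graph_def collapse_def)
  also have "(\<Sum>g\<in>?E \<rightarrow>\<^sub>E {0..<3}. F g) = P_dt G"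
    unfolding P_dt_def Let_def nv_dt_word[OF assms] F_def ..
  finally show "P_dtau G = smult (2 ^ ne G) (P_dt G)"
    by (simp add: of_nat_poly)
qed

end
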